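(* Let $a:[0,\infty)\to[0,\infty)$ be non-negative and non-decreasing, and define its generalized inverse $a^{\leftarrow}(y)=\sup\{x\ge0:a(x)\le y\}$ for $y\ge a(0)$. Let $s\in\{1,2,\dots\}$, $\delta\in(0,1/2)$, and for $n=1,2,\dots$ let $S_s(n)=\sum_{k=0}^n\ln\bigl(1+\tfrac1{\sqrt s}a\bigl(\tfrac{k+1}{\sqrt s}\bigr)\bigr)$. Then $0\le S_s(n)-\sqrt s\int_0^{(n+1)/\sqrt s}\ln\bigl(1+\tfrac1{\sqrt s}a(x)\bigr)dx\le\tfrac12 s^{\delta-1/2}$ whenever $n+1<\sqrt s\,a^{\leftarrow}(s^\delta/2)$. Furthermore, let $A(x)=\int_0^x a^2(u)\,du$ for $x\ge0$. Unless $a\equiv0$, $A$ is continuous and strictly increasing from $0$ at $x_0:=\sup\{x\ge0:a(x)=0\}$ to $\infty$ as $x\to\infty$; and, with $A^{\leftarrow}(y)=\sup\{x\ge0:A(x)\le y\}$, $0\le\int_0^{(n+1)/\sqrt s}a(x)\,dx-\sqrt s\int_0^{(n+1)/\sqrt s}\ln\bigl(1+\tfrac1{\sqrt s}a(x)\bigr)dx\le\tfrac12 s^{-\delta}$ whenever $n+1<\sqrt s\,A^{\leftarrow}(s^{1/2-\delta})$. *)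

theory Defs
  imports "HOL-Analysis.Analysis"
begin

text \<open>Generalized inverse f^{<-}(y) = sup {x >= 0. f x <= y}, taken in the extended
  reals (it is +infinity when the set is unbounded, -infinity when it is empty).\<close>
definition gen_inv :: "(real \<Rightarrow> real) \<Rightarrow> real \<Rightarrow> ereal" where
  "gen_inv f y = Sup (ereal ` {x. 0 \<le> x \<and> f x \<le> y})"

end

theory Submission
  imports Defs
begin

text \<open>Both estimates come from comparing a non-decreasing integrand with its values at the
  endpoints of the grid cells of width \<open>1/\<surd>s\<close>.  For the Riemann sum the cell errors
  telescope, so with \<open>t = (n+1)/\<surd>s\<close> the total error is at most
  \<open>ln (1 + a(t)/\<surd>s) \<le> a(t)/\<surd>s\<close>.  For the second estimate one integrates the pointwise
  bound \<open>0 \<le> y - c ln (1 + y/c) \<le> y\<^sup>2/(2c)\<close>, so the error is at most \<open>A(t)/(2\<surd>s)\<close>.  In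
  both cases the hypothesis on \<open>n\<close> says, via the generalized inverse, that \<open>a(t)\<close> resp.
  \<open>A(t)\<close> is below the given threshold.\<close>

lemma mono_on_integrable_on:
  fixes g :: "real \<Rightarrow> real"
  assumes "mono_on {0..} g" "0 \<le> u"
  shows "g integrable_on {u..v}"
proof -
  have "mono_on {u..v} g"
    using assms by (auto simp: mono_on_def)
  then show ?thesis
    by (rule integrable_on_mono_on)
qed

lemma mono_on_integral_bounds:
  fixes g :: "real \<Rightarrow> real"
  assumes g: "mono_on {0..} g" and uv: "0 \<le> u" "u \<le> v"
  shows "(v - u) * g u \<le> integral {u..v} g" and "integral {u..v} g \<le> (v - u) * g v"
proof -
  have int: "g integrable_on {u..v}"
    using mono_on_integrable_on[OF g uv(1)] .
  have "integral {u..v} (\<lambda>x. g u) \<le> integral {u..v} g"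
    by (rule integral_le) (use int g uv in \<open>auto simp: mono_on_def\<close>)
  then show "(v - u) * g u \<le> integral {u..v} g"
    using uv by simp
  have "integral {u..v} g \<le> integral {u..v} (\<lambda>x. g v)"
    by (rule integral_le) (use int g uv in \<open>auto simp: mono_on_def\<close>)
  then show "integral {u..v} g \<le> (v - u) * g v"
    using uv by simp
qed

lemma mono_on_integral_split:
  fixes g :: "real \<Rightarrow> real"
  assumes "mono_on {0..} g" "0 \<le> u" "u \<le> v"
  shows "integral {0..v} g = integral {0..u} g + integral {u..v} g"
  using Henstock_Kurzweil_Integration.integral_combine[of 0 u v g] mono_on_integrable_on[OF assms(1), of 0 v] assms
  by simp

lemma mono_on_Riemann_sums_integral:
  fixes g :: "real \<Rightarrow> real"
  assumes g: "mono_on {0..} g" and c: "0 < c"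
  shows "(\<Sum>k=0..n. g (real k / c)) \<le> c * integral {0..real (n+1) / c} g"
    and "c * integral {0..real (n+1) / c} g \<le> (\<Sum>k=0..n. g (real (k+1) / c))"
proof (induction n)
  case 0
  have "1/c * g 0 \<le> integral {0..1/c} g" "integral {0..1/c} g \<le> 1/c * g (1/c)"
    using mono_on_integral_bounds[OF g, of 0 "1/c"] c by simp_all
  with c show "(\<Sum>k=0..0. g (real k / c)) \<le> c * integral {0..real (0+1) / c} g"
    and "c * integral {0..real (0+1) / c} g \<le> (\<Sum>k=0..0. g (real (k+1) / c))"
    by (simp_all add: field_simps)
next
  case (Suc n)
  define u where "u = real (n+1) / c"
  define v where "v = real (Suc n + 1) / c"
  have u: "0 \<le> u" and vu: "v - u = 1/c" and uv: "u \<le> v"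
    using c by (simp_all add: u_def v_def field_simps)
  have "1/c * g u \<le> integral {u..v} g" "integral {u..v} g \<le> 1/c * g v"
    using mono_on_integral_bounds[OF g u uv] vu by simp_all
  then have cell: "g u \<le> c * integral {u..v} g" "c * integral {u..v} g \<le> g v"
    using c by (simp_all add: field_simps)
  have "c * integral {0..v} g = c * integral {0..u} g + c * integral {u..v} g"
    using mono_on_integral_split[OF g u uv] by (simp add: distrib_left)
  with Suc.IH cell
  show "(\<Sum>k=0..Suc n. g (real k / c)) \<le> c * integral {0..real (Suc n + 1) / c} g"
    and "c * integral {0..real (Suc n + 1) / c} g \<le> (\<Sum>k=0..Suc n. g (real (k+1) / c))"
    unfolding sum.atLeast0_atMost_Suc u_def v_def by (simp_all add: add.commute)
qed

lemma mono_on_right_Riemann_sum_error: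
  fixes g :: "real \<Rightarrow> real"
  assumes g: "mono_on {0..} g" and c: "0 < c"
  shows "0 \<le> (\<Sum>k=0..n. g (real (k+1) / c)) - c * integral {0..real (n+1) / c} g"
    and "(\<Sum>k=0..n. g (real (k+1) / c)) - c * integral {0..real (n+1) / c} g
           \<le> g (real (n+1) / c) - g 0"
proof -
  have "(\<Sum>k=0..n. g (real (k+1) / c)) - (\<Sum>k=0..n. g (real k / c)) = g (real (n+1) / c) - g 0"
    using sum_Suc_diff[of 0 n "\<lambda>k. g (real k / c)"] by (simp add: sum_subtractf)
  with mono_on_Riemann_sums_integral[OF g c, of n]
  show "0 \<le> (\<Sum>k=0..n. g (real (k+1) / c)) - c * integral {0..real (n+1) / c} g"
    and "(\<Sum>k=0..n. g (real (k+1) / c)) - c * integral {0..real (n+1) / c} g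
           \<le> g (real (n+1) / c) - g 0"
    by linarith+
qed

lemma ln_one_plus_lower_bound:
  fixes z :: real
  assumes z: "0 \<le> z"
  shows "z - z\<^sup>2 / 2 \<le> ln (1 + z)"
proof -
  let ?h = "\<lambda>w::real. ln (1 + w) - w + w\<^sup>2 / 2"
  have "?h 0 \<le> ?h z"
  proof (rule DERIV_nonneg_imp_nondecreasing[OF z])
    fix w :: real
    assume "0 \<le> w" "w \<le> z"
    then have "(?h has_real_derivative w\<^sup>2 / (1 + w)) (at w)" and "0 \<le> w\<^sup>2 / (1 + w)"
      by (auto intro!: derivative_eq_intros simp: field_simps power2_eq_square)
    then show "\<exists>y. (?h has_real_derivative y) (at w) \<and> 0 \<le> y"
      by blast
  qed
  then show ?thesis
    by simp
qed

lemma scaled_ln_one_plus_bounds: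
  fixes c y :: real
  assumes c: "0 < c" and y: "0 \<le> y"
  shows "0 \<le> y - c * ln (1 + y / c)" and "y - c * ln (1 + y / c) \<le> y\<^sup>2 / (2 * c)"
proof -
  have z: "0 \<le> y / c"
    using c y by simp
  have "c * ln (1 + y / c) \<le> c * (y / c)"
    using ln_add_one_self_le_self[OF z] c by (intro mult_left_mono) auto
  then show "0 \<le> y - c * ln (1 + y / c)"
    using c by simp
  have "c * (y / c - (y / c)\<^sup>2 / 2) \<le> c * ln (1 + y / c)"
    using ln_one_plus_lower_bound[OF z] c by (intro mult_left_mono) auto
  moreover have "c * (y / c - (y / c)\<^sup>2 / 2) = y - y\<^sup>2 / (2 * c)"
    using c by (simp add: field_simps power2_eq_square)
  ultimately show "y - c * ln (1 + y / c) \<le> y\<^sup>2 / (2 * c)"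
    by linarith
qed

lemma mono_on_comp_nonneg:
  fixes a h :: "real \<Rightarrow> real"
  assumes "mono_on {0..} a" "\<And>x. 0 \<le> x \<Longrightarrow> 0 \<le> a x" "mono_on {0..} h"
  shows "mono_on {0..} (\<lambda>x. h (a x))"
  using assms by (auto simp: mono_on_def)

lemma mono_on_ln_one_plus_scaled:
  fixes c :: real
  assumes "0 < c"
  shows "mono_on {0..} (\<lambda>y. ln (1 + y / c))"
proof (rule mono_onI)
  fix r s :: real
  assume "r \<in> {0..}" "s \<in> {0..}" "r \<le> s"
  with assms have "0 \<le> r / c" "r / c \<le> s / c"
    by (simp_all add: divide_right_mono)
  then show "ln (1 + r / c) \<le> ln (1 + s / c)"
    by simp
qed

lemma mono_on_power2: "mono_on {0..} (\<lambda>y::real. y\<^sup>2)"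
  by (auto simp: mono_on_def power_mono)

lemma le_of_less_gen_inv:
  fixes g :: "real \<Rightarrow> real"
  assumes g: "mono_on {0..} g" and c: "0 < c" and t: "0 \<le> t"
    and less: "ereal t < ereal c * gen_inv g y"
  shows "g (t / c) \<le> y"
proof -
  have "ereal (t / c) < gen_inv g y"
  proof (cases "gen_inv g y")
    case (real r)
    with less c show ?thesis
      by (simp add: field_simps)
  qed (use less c in simp_all)
  then obtain x where x: "0 \<le> x" "g x \<le> y" "t / c < x"
    unfolding gen_inv_def by (auto simp: less_Sup_iff)
  have "g (t / c) \<le> g x"
    using g x t c by (intro mono_onD[OF g]) auto
  with x show ?thesis
    by simp
qed

lemma indefinite_integral_increment:
  fixes g :: "real \<Rightarrow> real"
  assumes "mono_on {0..} g" "0 \<le> u" "u \<le> v"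
  shows "integral {0..u} g + (v - u) * g u \<le> integral {0..v} g"
  using mono_on_integral_split[OF assms] mono_on_integral_bounds(1)[OF assms] by linarith

lemma mono_on_indefinite_integral:
  fixes g :: "real \<Rightarrow> real"
  assumes g: "mono_on {0..} g" and nonneg: "\<And>x. 0 \<le> x \<Longrightarrow> 0 \<le> g x"
  shows "mono_on {0..} (\<lambda>x. integral {0..x} g)"
proof (rule mono_onI)
  fix u v :: real
  assume "u \<in> {0..}" "v \<in> {0..}" "u \<le> v"
  then have "0 \<le> (v - u) * g u"
    using nonneg[of u] by simp
  with \<open>u \<le> v\<close> \<open>u \<in> {0..}\<close> show "integral {0..u} g \<le> integral {0..v} g"
    using indefinite_integral_increment[OF g, of u v] by simp
qed

lemma continuous_on_indefinite_integral:
  fixes g :: "real \<Rightarrow> real"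
  assumes g: "mono_on {0..} g"
  shows "continuous_on {0..} (\<lambda>x. integral {0..x} g)"
proof -
  have "continuous (at x within {0..}) (\<lambda>x. integral {0..x} g)" if x: "0 \<le> x" for x
  proof -
    have "continuous_on {0..x+1} (\<lambda>x. integral {0..x} g)"
      by (rule indefinite_integral_continuous_1[OF mono_on_integrable_on[OF g]]) simp
    then have "continuous (at x within {0..x+1}) (\<lambda>x. integral {0..x} g)"
      using x by (simp add: continuous_on_eq_continuous_within)
    moreover have "at x within {0..} = at x within {0..x+1}"
      by (rule at_within_nhd[where S="{x - 1 <..< x + 1}"]) auto
    ultimately show ?thesis
      by simp
  qed
  then show ?thesis
    by (auto simp: continuous_on_eq_continuous_within)
qed

lemma mono_on_Sup_zero_set:
  fixes g :: "real \<Rightarrow> real"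
  assumes g: "mono_on {0..} g" and nonneg: "\<And>x. 0 \<le> x \<Longrightarrow> 0 \<le> g x"
    and x1: "0 \<le> x1" "g x1 \<noteq> 0"
  defines "x0 \<equiv> Sup ({x. 0 \<le> x \<and> g x = 0} \<union> {0})"
  shows "0 \<le> x0"
    and "\<And>u. 0 \<le> u \<Longrightarrow> u < x0 \<Longrightarrow> g u = 0"
    and "\<And>u. x0 < u \<Longrightarrow> 0 < g u"
proof -
  define Z where "Z = {x. 0 \<le> x \<and> g x = 0} \<union> {0::real}"
  have x0_Z: "x0 = Sup Z"
    by (simp add: x0_def Z_def)
  have "z \<le> x1" if "z \<in> Z" for z
  proof (rule ccontr)
    assume "\<not> z \<le> x1"
    with that x1 have "g x1 \<le> g z" "g z = 0"
      using mono_onD[OF g, of x1 z] by (auto simp: Z_def)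
    with x1 nonneg[of x1] show False
      by simp
  qed
  then have bdd: "bdd_above Z"
    by (auto simp: bdd_above_def)
  show x0: "0 \<le> x0"
    unfolding x0_Z by (rule cSup_upper[OF _ bdd]) (simp add: Z_def)
  show "g u = 0" if u: "0 \<le> u" "u < x0" for u
  proof -
    obtain z where z: "z \<in> Z" "u < z"
      using u(2) less_cSup_iff[OF _ bdd] unfolding x0_Z by (auto simp: Z_def)
    with u have "g u \<le> g z" "g z = 0"
      using mono_onD[OF g, of u z] by (auto simp: Z_def)
    with nonneg[OF u(1)] show ?thesis
      by simp
  qed
  show "0 < g u" if u: "x0 < u" for u
  proof (rule ccontr)
    assume "\<not> 0 < g u"
    with u x0 nonneg[of u] have "u \<in> Z"
      by (auto simp: Z_def)
    then have "u \<le> x0"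
      unfolding x0_Z by (rule cSup_upper[OF _ bdd])
    with u show False
      by simp
  qed
qed

lemma strict_mono_on_indefinite_integral:
  fixes g :: "real \<Rightarrow> real"
  assumes g: "mono_on {0..} g" and nonneg: "\<And>x. 0 \<le> x \<Longrightarrow> 0 \<le> g x"
    and x0: "0 \<le> x0" and pos: "\<And>u. x0 < u \<Longrightarrow> 0 < g u"
  shows "strict_mono_on {x0..} (\<lambda>x. integral {0..x} g)"
proof (rule strict_mono_onI)
  fix x y
  assume xy: "x \<in> {x0..}" "y \<in> {x0..}" "x < y"
  define m where "m = (x + y) / 2"
  have m: "x \<le> m" "m \<le> y" "x0 < m" "m < y"
    using xy by (auto simp: m_def)
  have "integral {0..x} g \<le> integral {0..m} g"
    using mono_onD[OF mono_on_indefinite_integral[OF g nonneg], of x m] m xy x0 by simp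
  moreover have "integral {0..m} g + (y - m) * g m \<le> integral {0..y} g"
    using indefinite_integral_increment[OF g _ m(2)] m x0 by simp
  moreover have "0 < (y - m) * g m"
    using m pos[OF m(3)] by simp
  ultimately show "integral {0..x} g < integral {0..y} g"
    by linarith
qed

lemma filterlim_indefinite_integral_at_top:
  fixes g :: "real \<Rightarrow> real"
  assumes g: "mono_on {0..} g" and nonneg: "\<And>x. 0 \<le> x \<Longrightarrow> 0 \<le> g x"
    and x1: "0 \<le> x1" "0 < g x1"
  shows "filterlim (\<lambda>x. integral {0..x} g) at_top at_top"
  unfolding filterlim_at_top eventually_at_top_linorder
proof
  fix Q :: real
  show "\<exists>N. \<forall>x\<ge>N. Q \<le> integral {0..x} g"
  proof (intro exI allI impI)
    fix x
    assume x: "x1 + \<bar>Q\<bar> / g x1 \<le> x"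
    have "0 \<le> \<bar>Q\<bar> / g x1"
      using x1 by simp
    with x have "x1 \<le> x" and "\<bar>Q\<bar> \<le> (x - x1) * g x1"
      using x1 by (linarith, simp add: field_simps)
    moreover have "integral {0..x1} g + (x - x1) * g x1 \<le> integral {0..x} g"
      using indefinite_integral_increment[OF g x1(1)] \<open>x1 \<le> x\<close> by simp
    moreover have "0 \<le> integral {0..x1} g"
      using mono_onD[OF mono_on_indefinite_integral[OF g nonneg], of 0 x1] x1(1) by simp
    ultimately show "Q \<le> integral {0..x} g"
      by linarith
  qed
qed

lemma integral_vanishing_eq_0:
  fixes g :: "real \<Rightarrow> real"
  assumes "\<And>u. 0 \<le> u \<Longrightarrow> u < x0 \<Longrightarrow> g u = 0"
  shows "integral {0..x0} g = 0"
proof -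
  have "integral {0..x0} g = integral {0..x0} (\<lambda>u. 0)"
    by (rule integral_spike[of "{x0}"]) (use assms in auto)
  then show ?thesis
    by simp
qed

lemma indefinite_integral_properties:
  fixes g :: "real \<Rightarrow> real"
  assumes g: "mono_on {0..} g" and nonneg: "\<And>x. 0 \<le> x \<Longrightarrow> 0 \<le> g x"
    and nonzero: "\<not> (\<forall>x\<ge>0. g x = 0)"
  defines "x0 \<equiv> Sup ({x. 0 \<le> x \<and> g x = 0} \<union> {0})"
  shows "continuous_on {0..} (\<lambda>x. integral {0..x} g)"
    and "integral {0..x0} g = 0"
    and "strict_mono_on {x0..} (\<lambda>x. integral {0..x} g)"
    and "filterlim (\<lambda>x. integral {0..x} g) at_top at_top"
proof -
  obtain x1 where x1: "0 \<le> x1" "g x1 \<noteq> 0"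
    using nonzero by blast
  note x0 = mono_on_Sup_zero_set[OF g nonneg x1, folded x0_def]
  show "continuous_on {0..} (\<lambda>x. integral {0..x} g)"
    using continuous_on_indefinite_integral[OF g] .
  show "integral {0..x0} g = 0"
    using integral_vanishing_eq_0 x0(2) by blast
  show "strict_mono_on {x0..} (\<lambda>x. integral {0..x} g)"
    using strict_mono_on_indefinite_integral[OF g nonneg x0(1,3)] .
  show "filterlim (\<lambda>x. integral {0..x} g) at_top at_top"
    using filterlim_indefinite_integral_at_top[OF g nonneg x1(1)] x1 nonneg[of x1] by simp
qed

lemma ln_Riemann_sum_error:
  fixes a :: "real \<Rightarrow> real" and c :: real and n :: nat
  assumes nonneg: "\<And>x. 0 \<le> x \<Longrightarrow> 0 \<le> a x" and mono: "mono_on {0..} a" and c: "0 < c"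
  defines "S \<equiv> \<Sum>k=0..n. ln (1 + a (real (k+1) / c) / c)"
    and "I \<equiv> integral {0..real (n+1) / c} (\<lambda>x. ln (1 + a x / c))"
  shows "0 \<le> S - c * I" and "S - c * I \<le> a (real (n+1) / c) / c"
proof -
  define f where "f x = ln (1 + a x / c)" for x
  have f: "mono_on {0..} f"
    unfolding f_def by (rule mono_on_comp_nonneg[OF mono nonneg mono_on_ln_one_plus_scaled[OF c]])
  have "0 \<le> f 0"
    using nonneg[of 0] c by (simp add: f_def)
  moreover have "f (real (n+1) / c) \<le> a (real (n+1) / c) / c"
    unfolding f_def using nonneg[of "real (n+1) / c"] c by (intro ln_add_one_self_le_self) simp
  ultimately show "0 \<le> S - c * I" and "S - c * I \<le> a (real (n+1) / c) / c"
    using mono_on_right_Riemann_sum_error[OF f c, of n] unfolding S_def I_def f_def by linarith+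
qed

lemma integral_minus_scaled_ln_integral:
  fixes a :: "real \<Rightarrow> real" and c t :: real
  assumes nonneg: "\<And>x. 0 \<le> x \<Longrightarrow> 0 \<le> a x" and mono: "mono_on {0..} a" and c: "0 < c"
  defines "D \<equiv> integral {0..t} a - c * integral {0..t} (\<lambda>x. ln (1 + a x / c))"
  shows "0 \<le> D" and "D \<le> integral {0..t} (\<lambda>x. (a x)\<^sup>2) / (2 * c)"
proof -
  define f where "f = (\<lambda>x. c * ln (1 + a x / c))"
  have int_ln: "(\<lambda>x. ln (1 + a x / c)) integrable_on {0..t}"
    using mono_on_integrable_on[OF mono_on_comp_nonneg[OF mono nonneg mono_on_ln_one_plus_scaled[OF c]]]
    by simp
  have int_a: "a integrable_on {0..t}" and int_sq: "(\<lambda>x. (a x)\<^sup>2) integrable_on {0..t}"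
    using mono_on_integrable_on[OF mono] mono_on_integrable_on[OF mono_on_comp_nonneg[OF mono nonneg mono_on_power2]]
    by simp_all
  have int_f: "f integrable_on {0..t}"
    unfolding f_def by (rule integrable_on_mult_right[OF int_ln])
  have "integral {0..t} f = c * integral {0..t} (\<lambda>x. ln (1 + a x / c))"
    unfolding f_def by (rule integral_mult[OF int_ln, symmetric])
  then have D: "D = integral {0..t} (\<lambda>x. a x - f x)"
    unfolding D_def Henstock_Kurzweil_Integration.integral_diff[OF int_a int_f] by linarith
  have pointwise: "0 \<le> a x - f x" "a x - f x \<le> (a x)\<^sup>2 / (2 * c)" if "x \<in> {0..t}" for x
    using scaled_ln_one_plus_bounds[OF c nonneg, of x] that by (simp_all add: f_def)
  have int_diff: "(\<lambda>x. a x - f x) integrable_on {0..t}"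
    by (rule Henstock_Kurzweil_Integration.integrable_diff[OF int_a int_f])
  show "0 \<le> D"
    unfolding D
    by (rule Henstock_Kurzweil_Integration.integral_nonneg[OF int_diff]) (use pointwise(1) in blast)
  have "D \<le> integral {0..t} (\<lambda>x. (a x)\<^sup>2 / (2 * c))"
    unfolding D
    by (rule integral_le[OF int_diff integrable_on_divide[OF int_sq]]) (use pointwise(2) in blast)
  then show "D \<le> integral {0..t} (\<lambda>x. (a x)\<^sup>2) / (2 * c)"
    by simp
qed

lemma ln_Riemann_sum_error_gen_inv:
  fixes a :: "real \<Rightarrow> real" and c y :: real and n :: nat
  assumes nonneg: "\<And>x. 0 \<le> x \<Longrightarrow> 0 \<le> a x" and mono: "mono_on {0..} a" and c: "0 < c"
    and below: "ereal (real (n + 1)) < ereal c * gen_inv a y"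
  shows "(\<Sum>k=0..n. ln (1 + a (real (k+1) / c) / c))
           - c * integral {0..real (n+1) / c} (\<lambda>x. ln (1 + a x / c)) \<le> y / c"
proof -
  have "a (real (n + 1) / c) \<le> y"
    using le_of_less_gen_inv[OF mono c _ below] by simp
  then have "a (real (n + 1) / c) / c \<le> y / c"
    by (rule divide_right_mono) (use c in simp)
  with ln_Riemann_sum_error(2)[OF nonneg mono c, of n] show ?thesis
    by linarith
qed

lemma integral_minus_scaled_ln_integral_gen_inv:
  fixes a :: "real \<Rightarrow> real" and c y :: real and n :: nat
  assumes nonneg: "\<And>x. 0 \<le> x \<Longrightarrow> 0 \<le> a x" and mono: "mono_on {0..} a" and c: "0 < c"
    and below: "ereal (real (n + 1)) < ereal c * gen_inv (\<lambda>x. integral {0..x} (\<lambda>u. (a u)\<^sup>2)) y"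
  shows "integral {0..real (n + 1) / c} a
           - c * integral {0..real (n + 1) / c} (\<lambda>x. ln (1 + a x / c)) \<le> y / (2 * c)"
proof -
  have "mono_on {0..} (\<lambda>x. integral {0..x} (\<lambda>u. (a u)\<^sup>2))"
    using mono_on_indefinite_integral mono_on_comp_nonneg[OF mono nonneg mono_on_power2] by simp
  from le_of_less_gen_inv[OF this c _ below]
  have "integral {0..real (n + 1) / c} (\<lambda>u. (a u)\<^sup>2) \<le> y"
    by simp
  then have "integral {0..real (n + 1) / c} (\<lambda>u. (a u)\<^sup>2) / (2 * c) \<le> y / (2 * c)"
    by (rule divide_right_mono) (use c in simp)
  with integral_minus_scaled_ln_integral(2)[OF nonneg mono c, of "real (n + 1) / c"] show ?thesis
    by linarith
qed

theorem lemmaE1: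
  fixes a :: "real \<Rightarrow> real" and s :: nat and \<delta> :: real
  assumes nonneg: "\<And>x. 0 \<le> x \<Longrightarrow> 0 \<le> a x"
    and mono: "mono_on {0..} a"
    and s_pos: "1 \<le> s"
    and delta: "0 < \<delta>" "\<delta> < 1/2"
  shows
    "(\<forall>n::nat. 1 \<le> n \<longrightarrow>
        ereal (real (n + 1)) < ereal (sqrt (real s)) * gen_inv a (real s powr \<delta> / 2) \<longrightarrow>
        (let S = (\<Sum>k=0..n. ln (1 + a (real (k + 1) / sqrt (real s)) / sqrt (real s)));
             I = sqrt (real s) * integral {0..real (n + 1) / sqrt (real s)}
                   (\<lambda>x. ln (1 + a x / sqrt (real s)))
         in 0 \<le> S - I \<and> S - I \<le> (1/2) * real s powr (\<delta> - 1/2)))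
    \<and>
    (\<not> (\<forall>x\<ge>0. a x = 0) \<longrightarrow>
       (let A = (\<lambda>x. integral {0..x} (\<lambda>u. (a u)\<^sup>2));
            x0 = Sup ({x. 0 \<le> x \<and> a x = 0} \<union> {0})
        in continuous_on {0..} A \<and> A x0 = 0 \<and> strict_mono_on {x0..} A
           \<and> filterlim A at_top at_top))
    \<and>
    (\<forall>n::nat. 1 \<le> n \<longrightarrow>
        ereal (real (n + 1)) < ereal (sqrt (real s)) *
           gen_inv (\<lambda>x. integral {0..x} (\<lambda>u. (a u)\<^sup>2)) (real s powr (1/2 - \<delta>)) \<longrightarrow>
        (let t = real (n + 1) / sqrt (real s);
             D = integral {0..t} a
                 - sqrt (real s) * integral {0..t} (\<lambda>x. ln (1 + a x / sqrt (real s)))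
         in 0 \<le> D \<and> D \<le> (1/2) * real s powr (- \<delta>)))"
proof -
  define c where "c = sqrt (real s)"
  have c: "0 < c" and s: "0 < real s"
    using s_pos by (simp_all add: c_def)
  have c_powr: "c = real s powr (1/2)"
    using s by (simp add: c_def powr_half_sqrt)
  have bound1: "real s powr \<delta> / 2 / c = (1/2) * real s powr (\<delta> - 1/2)"
    using s by (simp add: c_powr powr_diff)
  have bound3: "real s powr (1/2 - \<delta>) / (2 * c) = (1/2) * real s powr (- \<delta>)"
    using s by (simp add: c_powr powr_diff powr_minus_divide)
  have sq: "mono_on {0..} (\<lambda>u. (a u)\<^sup>2)" "\<And>x. 0 \<le> x \<Longrightarrow> 0 \<le> (a x)\<^sup>2"
    using mono_on_comp_nonneg[OF mono nonneg mono_on_power2] by simp_all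
  have zeros: "{x. 0 \<le> x \<and> (a x)\<^sup>2 = 0} = {x. 0 \<le> x \<and> a x = 0}"
    and nonzero: "(\<forall>x\<ge>0. (a x)\<^sup>2 = 0) \<longleftrightarrow> (\<forall>x\<ge>0. a x = 0)"
    by simp_all
  show ?thesis
    unfolding Let_def c_def[symmetric] bound1[symmetric] bound3[symmetric]
    by (intro conjI allI impI)
      (rule ln_Riemann_sum_error(1) ln_Riemann_sum_error_gen_inv
         integral_minus_scaled_ln_integral(1) integral_minus_scaled_ln_integral_gen_inv
         indefinite_integral_properties[OF sq, unfolded zeros nonzero] nonneg mono c
       | assumption)+
qed

end
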